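(* Let $M$ be a magma satisfying $xy = xz$ and $(xy)z = xy$ for all $x,y,z\in M$. Then $M$ satisfies $xy = x$ for all $x,y\in M$ if and only if $M$ avoids the $2$-element null semigroup $2_N$ on $\{0,1\}$ with Cayley table \[ \begin{array}{c|cc} 2_{N} & 0 & 1 \\ \hline 0 & 0 & 0 \\ 1 & 0 & 0 \end{array}. \]
   Context: A magma is a nonempty set with a binary operation, written by juxtaposition. A magma $M$ avoids a magma $F$ if no submagma of $M$ is isomorphic to $F$. *)

theory Defs
  imports Main
begin

definition magma :: "'a set \<Rightarrow> ('a \<Rightarrow> 'a \<Rightarrow> 'a) \<Rightarrow> bool" where
  "magma M f \<longleftrightarrow> M \<noteq> {} \<and> (\<forall>x\<in>M. \<forall>y\<in>M. f x y \<in> M)"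

definition submagma :: "'a set \<Rightarrow> 'a set \<Rightarrow> ('a \<Rightarrow> 'a \<Rightarrow> 'a) \<Rightarrow> bool" where
  "submagma S M f \<longleftrightarrow> S \<noteq> {} \<and> S \<subseteq> M \<and> (\<forall>x\<in>S. \<forall>y\<in>S. f x y \<in> S)"

definition magma_iso :: "('b \<Rightarrow> 'a) \<Rightarrow> 'b set \<Rightarrow> ('b \<Rightarrow> 'b \<Rightarrow> 'b) \<Rightarrow> 'a set \<Rightarrow> ('a \<Rightarrow> 'a \<Rightarrow> 'a) \<Rightarrow> bool" where
  "magma_iso h F g S f \<longleftrightarrow> bij_betw h F S \<and> (\<forall>x\<in>F. \<forall>y\<in>F. h (g x y) = f (h x) (h y))"

definition avoids :: "'a set \<Rightarrow> ('a \<Rightarrow> 'a \<Rightarrow> 'a) \<Rightarrow> 'b set \<Rightarrow> ('b \<Rightarrow> 'b \<Rightarrow> 'b) \<Rightarrow> bool" where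
  "avoids M f F g \<longleftrightarrow> \<not> (\<exists>S h. submagma S M f \<and> magma_iso h F g S f)"

definition null2_carrier :: "nat set" where "null2_carrier = {0, 1}"
definition null2_op :: "nat \<Rightarrow> nat \<Rightarrow> nat" where "null2_op x y = 0"

end

theory Submission
  imports Defs
begin

text \<open>
  A copy of \<open>2\<^sub>N\<close> inside \<open>M\<close> is the same thing as two distinct elements \<open>a \<noteq> x\<close> all of whose
  products equal \<open>a\<close>. A left-zero magma has no such pair, since there \<open>x x = x\<close>. Conversely,
  if \<open>x y \<noteq> x\<close>, put \<open>a = x y\<close>: the first identity gives \<open>x z = a\<close> for every \<open>z\<close>, the second
  gives \<open>a z = a\<close>, so \<open>{a, x}\<close> is such a pair.
\<close>

definition null_pair :: "('a \<Rightarrow> 'a \<Rightarrow> 'a) \<Rightarrow> 'a \<Rightarrow> 'a \<Rightarrow> bool" where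
  "null_pair f a x \<longleftrightarrow> a \<noteq> x \<and> (\<forall>u\<in>{a, x}. \<forall>v\<in>{a, x}. f u v = a)"

lemma null_pair_iff_not_avoids_null2:
  "(\<exists>a\<in>M. \<exists>x\<in>M. null_pair f a x) \<longleftrightarrow> \<not> avoids M f null2_carrier null2_op"
proof
  assume "\<exists>a\<in>M. \<exists>x\<in>M. null_pair f a x"
  then obtain a x where "a \<in> M" "x \<in> M" and pair: "null_pair f a x" by blast
  define h where "h = (\<lambda>n::nat. if n = 0 then a else x)"
  have "submagma {a, x} M f"
    using \<open>a \<in> M\<close> \<open>x \<in> M\<close> pair unfolding submagma_def null_pair_def by auto
  moreover have "magma_iso h null2_carrier null2_op {a, x} f"
    using pair unfolding magma_iso_def null2_carrier_def null2_op_def null_pair_def h_def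
    by (auto simp: bij_betw_def inj_on_def)
  ultimately show "\<not> avoids M f null2_carrier null2_op"
    unfolding avoids_def by blast
next
  assume "\<not> avoids M f null2_carrier null2_op"
  then obtain S h where S: "submagma S M f" and h: "magma_iso h null2_carrier null2_op S f"
    unfolding avoids_def by blast
  have "bij_betw h {0, 1} S"
    using h unfolding magma_iso_def null2_carrier_def by simp
  then have S_eq: "S = {h 0, h 1}" and "h 0 \<noteq> h 1"
    by (auto simp: bij_betw_def inj_on_def)
  have product: "f (h m) (h n) = h 0" if "m \<in> {0, 1}" "n \<in> {0, 1}" for m n
    using h that unfolding magma_iso_def null2_carrier_def null2_op_def by metis
  have "null_pair f (h 0) (h 1)"
    using \<open>h 0 \<noteq> h 1\<close> product[of 0 0] product[of 0 1] product[of 1 0] product[of 1 1]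
    unfolding null_pair_def by auto
  moreover have "h 0 \<in> M" "h 1 \<in> M"
    using S S_eq unfolding submagma_def by auto
  ultimately show "\<exists>a\<in>M. \<exists>x\<in>M. null_pair f a x" by blast
qed

lemma left_zero_no_null_pair:
  assumes "\<forall>x\<in>M. \<forall>y\<in>M. f x y = x" and "x \<in> M"
  shows "\<not> null_pair f a x"
  using assms unfolding null_pair_def by auto

lemma null_pair_of_non_left_zero_product:
  assumes closed: "\<forall>x\<in>M. \<forall>y\<in>M. f x y \<in> M"
    and left_const: "\<forall>x\<in>M. \<forall>y\<in>M. \<forall>z\<in>M. f x y = f x z"
    and product_left_zero: "\<forall>x\<in>M. \<forall>y\<in>M. \<forall>z\<in>M. f (f x y) z = f x y"
    and "x \<in> M" "y \<in> M" "f x y \<noteq> x"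
  shows "null_pair f (f x y) x"
proof -
  have "f x z = f x y" if "z \<in> M" for z
    using left_const \<open>x \<in> M\<close> \<open>y \<in> M\<close> that by metis
  moreover have "f (f x y) z = f x y" if "z \<in> M" for z
    using product_left_zero \<open>x \<in> M\<close> \<open>y \<in> M\<close> that by blast
  moreover have "f x y \<in> M"
    using closed \<open>x \<in> M\<close> \<open>y \<in> M\<close> by blast
  ultimately show ?thesis
    using \<open>x \<in> M\<close> \<open>f x y \<noteq> x\<close> unfolding null_pair_def by auto
qed

theorem mainTheorem7:
  fixes M :: "'a set" and f :: "'a \<Rightarrow> 'a \<Rightarrow> 'a"
  assumes "magma M f"
    and "\<forall>x\<in>M. \<forall>y\<in>M. \<forall>z\<in>M. f x y = f x z"
    and "\<forall>x\<in>M. \<forall>y\<in>M. \<forall>z\<in>M. f (f x y) z = f x y"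
  shows "(\<forall>x\<in>M. \<forall>y\<in>M. f x y = x) \<longleftrightarrow> avoids M f null2_carrier null2_op"
proof
  assume "\<forall>x\<in>M. \<forall>y\<in>M. f x y = x"
  then have "\<not> (\<exists>a\<in>M. \<exists>x\<in>M. null_pair f a x)"
    using left_zero_no_null_pair by metis
  then show "avoids M f null2_carrier null2_op"
    using null_pair_iff_not_avoids_null2 by metis
next
  assume "avoids M f null2_carrier null2_op"
  then have no_pair: "\<not> null_pair f a x" if "a \<in> M" "x \<in> M" for a x
    using null_pair_iff_not_avoids_null2 that by metis
  have closed: "\<forall>x\<in>M. \<forall>y\<in>M. f x y \<in> M"
    using assms(1) unfolding magma_def by blast
  show "\<forall>x\<in>M. \<forall>y\<in>M. f x y = x"
  proof (intro ballI)
    fix x y assume "x \<in> M" "y \<in> M"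
    then show "f x y = x"
      using no_pair null_pair_of_non_left_zero_product[OF closed assms(2,3)] closed by metis
  qed
qed

end
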